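(* Let $\theta>0$ and let $X_1,X_2$ be independent Ornstein–Uhlenbeck processes $X_i(t)=\int_0^te^{-\theta(t-u)}dW^i(u)$ driven by independent standard Brownian motions. Let $(\Delta_n)_{n\ge1}$ be positive numbers with $\Delta_n\to0$ and $T_n:=n\Delta_n\to\infty$, and let $t_k:=k\Delta_n$. Set $$A(n):=\frac{\sqrt{T_n}}{n}\sum_{k=0}^{n-1}X_1(t_k)X_2(t_k),\qquad F_{T_n}:=\frac{1}{\sqrt{T_n}}\int_0^{T_n}X_1(t)X_2(t)dt,\qquad \delta(n):=A(n)-F_{T_n}.$$ Then, with $C_\theta:=4\max\big(\frac{8}{9\theta},\frac{\sqrt2}{3}\theta^{-1/2},\frac14\big)$, for every $n$ with $\Delta_n\le 1$, $$\mathbf E[\delta(n)^2]\le C_\theta\, n\Delta_n^2.$$ In particular, if $n\Delta_n^2\to0$ then $\mathbf E[\delta(n)^2]\to0$. *)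

theory Defs
  imports "HOL-Probability.Probability"
begin

definition std_brownian_motion :: "'a measure \<Rightarrow> (real \<Rightarrow> 'a \<Rightarrow> real) \<Rightarrow> bool" where
  "std_brownian_motion M W \<longleftrightarrow>
     prob_space M \<and>
     (\<forall>t. W t \<in> borel_measurable M) \<and>
     (\<forall>\<omega>\<in>space M. W 0 \<omega> = 0 \<and> continuous_on {0..} (\<lambda>t. W t \<omega>)) \<and>
     (\<forall>s t. 0 \<le> s \<longrightarrow> s < t \<longrightarrow>
        distributed M lborel (\<lambda>\<omega>. W t \<omega> - W s \<omega>) (normal_density 0 (sqrt (t - s)))) \<and>
     (\<forall>(ts :: nat \<Rightarrow> real) k. 0 \<le> ts 0 \<longrightarrow> (\<forall>i<k. ts i < ts (Suc i)) \<longrightarrow>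
        prob_space.indep_vars M (\<lambda>_. borel) (\<lambda>i \<omega>. W (ts (Suc i)) \<omega> - W (ts i) \<omega>) {..<k})"

definition indep_processes :: "'a measure \<Rightarrow> (real \<Rightarrow> 'a \<Rightarrow> real) \<Rightarrow> (real \<Rightarrow> 'a \<Rightarrow> real) \<Rightarrow> bool" where
  "indep_processes M W1 W2 \<longleftrightarrow>
     (\<forall>J. finite J \<longrightarrow> J \<subseteq> {0..} \<longrightarrow>
        prob_space.indep_var M
          (PiM J (\<lambda>_. borel)) (\<lambda>\<omega>. restrict (\<lambda>t. W1 t \<omega>) J)
          (PiM J (\<lambda>_. borel)) (\<lambda>\<omega>. restrict (\<lambda>t. W2 t \<omega>) J))"

text \<open>Ornstein--Uhlenbeck process X(t) = \<integral>_0^t e^{-\<theta>(t-u)} dW(u), with the Wiener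
  integral of the deterministic C^1 integrand f(u) = e^{-\<theta>(t-u)} given pathwise
  (Paley--Wiener) by f(t) W(t) - \<integral>_0^t f'(u) W(u) du, f'(u) = \<theta> e^{-\<theta>(t-u)}.\<close>
definition ou_process :: "real \<Rightarrow> (real \<Rightarrow> 'a \<Rightarrow> real) \<Rightarrow> real \<Rightarrow> 'a \<Rightarrow> real" where
  "ou_process \<theta> W t \<omega> = W t \<omega> - integral {0..t} (\<lambda>u. \<theta> * exp (- \<theta> * (t - u)) * W u \<omega>)"

definition A_riemann :: "real \<Rightarrow> (real \<Rightarrow> 'a \<Rightarrow> real) \<Rightarrow> (real \<Rightarrow> 'a \<Rightarrow> real) \<Rightarrow> real \<Rightarrow> nat \<Rightarrow> 'a \<Rightarrow> real" where
  "A_riemann \<theta> W1 W2 d n \<omega> =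
     sqrt (real n * d) / real n *
     (\<Sum>k<n. ou_process \<theta> W1 (real k * d) \<omega> * ou_process \<theta> W2 (real k * d) \<omega>)"

definition F_integral :: "real \<Rightarrow> (real \<Rightarrow> 'a \<Rightarrow> real) \<Rightarrow> (real \<Rightarrow> 'a \<Rightarrow> real) \<Rightarrow> real \<Rightarrow> 'a \<Rightarrow> real" where
  "F_integral \<theta> W1 W2 T \<omega> =
     1 / sqrt T * integral {0..T} (\<lambda>t. ou_process \<theta> W1 t \<omega> * ou_process \<theta> W2 t \<omega>)"

definition delta_err :: "real \<Rightarrow> (real \<Rightarrow> 'a \<Rightarrow> real) \<Rightarrow> (real \<Rightarrow> 'a \<Rightarrow> real) \<Rightarrow> real \<Rightarrow> nat \<Rightarrow> 'a \<Rightarrow> real" where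
  "delta_err \<theta> W1 W2 d n \<omega> = A_riemann \<theta> W1 W2 d n \<omega> - F_integral \<theta> W1 W2 (real n * d) \<omega>"

definition C_theta :: "real \<Rightarrow> real" where
  "C_theta \<theta> = 4 * max (8 / (9 * \<theta>)) (max (sqrt 2 / 3 * \<theta> powr (-1/2)) (1/4))"

end

theory Submission
  imports Defs
begin

text \<open>
  Write \<open>Y = X\<^sub>1 X\<^sub>2\<close> and \<open>T = n \<Delta>\<close>. Then \<open>\<delta>(n)\<close> is \<open>1 / sqrt T\<close> times the sum over the cells
  \<open>[t\<^sub>k, t\<^sub>k + \<Delta>]\<close> of \<open>\<integral> (Y(t\<^sub>k) - Y(t)) dt\<close>. Replacing each cell integral by a left Riemann
  sum with \<open>m + 1\<close> nodes exhibits \<open>\<delta>(n)\<close> as the pointwise limit of averages of increments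
  \<open>Y(t\<^sub>k) - Y(t\<^sub>k + u)\<close>, \<open>0 \<le> u \<le> \<Delta>\<close>; by Fatou's lemma and Cauchy--Schwarz it therefore suffices
  to know \<open>E (Y(a) - Y(b))\<^sup>2 \<le> 3 (b - a) / \<theta>\<close>, which yields \<open>E \<delta>(n)\<^sup>2 \<le> 3 n \<Delta>\<^sup>2 / \<theta> \<le> C\<^sub>\<theta> n \<Delta>\<^sup>2\<close>.

  The increment bound follows from \<open>Y(a) - Y(b) = X\<^sub>1(a) (X\<^sub>2(a) - X\<^sub>2(b)) + X\<^sub>2(b) (X\<^sub>1(a) - X\<^sub>1(b))\<close>,
  the independence of \<open>X\<^sub>1\<close> and \<open>X\<^sub>2\<close>, and the Gaussian moment bounds \<open>E X(t)\<^sup>2 \<le> 1 / (2 \<theta>)\<close> and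
  \<open>E (X(a) - X(b))\<^sup>2 \<le> (1 - exp (- \<theta> (b - a)))\<^sup>2 / (2 \<theta>) + (b - a)\<close>. As \<open>X\<close> is defined pathwise,
  these moments are obtained, again through Fatou's lemma, from the Wiener sums
  \<open>\<Sum>\<^sub>i exp (- \<theta> (t - (i + 1) h)) (W((i + 1) h) - W(i h))\<close>, which converge to \<open>X(t)\<close> by summation
  by parts.
\<close>

section \<open>Riemann sums and an exponential sum\<close>

lemma integral_sum_cells:
  fixes g :: "real \<Rightarrow> real"
  assumes "0 \<le> h" "continuous_on {a..a + real N * h} g"
  shows "integral {a..a + real N * h} g = (\<Sum>j<N. integral {a + real j * h..a + real (Suc j) * h} g)"
  using assms(2)
proof (induction N)
  case (Suc N)
  have sub: "{a..a + real N * h} \<subseteq> {a..a + real (Suc N) * h}"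
    using assms(1) by (auto simp: algebra_simps)
  have "integral {a..a + real N * h} g + integral {a + real N * h..a + real (Suc N) * h} g
      = integral {a..a + real (Suc N) * h} g"
    by (rule Henstock_Kurzweil_Integration.integral_combine)
       (use assms(1) Suc.prems in \<open>auto intro!: integrable_continuous_interval simp: algebra_simps\<close>)
  then show ?case
    using Suc.IH continuous_on_subset[OF Suc.prems sub] by simp
qed simp

lemma left_endpoint_integral_error_le:
  fixes g :: "real \<Rightarrow> real"
  assumes "c \<le> d" "continuous_on {c..d} g" "\<And>x. x \<in> {c..d} \<Longrightarrow> \<bar>g x - g c\<bar> \<le> e"
  shows "\<bar>(d - c) * g c - integral {c..d} g\<bar> \<le> e * (d - c)"
proof -
  have "norm (integral {c..d} (\<lambda>x. g x - g c)) \<le> e * (d - c)"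
    by (rule integral_bound) (use assms in \<open>auto intro!: continuous_intros\<close>)
  moreover have "integral {c..d} (\<lambda>x. g x - g c) = integral {c..d} g - (d - c) * g c"
    using assms(1,2) by (simp add: integral_diff integrable_continuous_interval)
  ultimately show ?thesis
    by (simp add: abs_minus_commute)
qed

lemma left_Riemann_sum_error_le:
  fixes g :: "real \<Rightarrow> real"
  assumes ab: "a \<le> b" and N: "N > 0" and cont: "continuous_on {a..b} g"
    and modulus: "\<And>x y. x \<in> {a..b} \<Longrightarrow> y \<in> {a..b} \<Longrightarrow> \<bar>x - y\<bar> \<le> (b - a) / real N \<Longrightarrow> \<bar>g x - g y\<bar> \<le> e"
  shows "\<bar>(\<Sum>j<N. (b - a) / real N * g (a + real j * ((b - a) / real N))) - integral {a..b} g\<bar> \<le> e * (b - a)"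
proof -
  define h where "h = (b - a) / real N"
  have h: "0 \<le> h" using ab by (simp add: h_def)
  have b: "a + real N * h = b" using N by (simp add: h_def)
  have cell: "\<bar>h * g (a + real j * h) - integral {a + real j * h..a + real (Suc j) * h} g\<bar> \<le> e * h"
    if "j < N" for j
  proof -
    have "real (Suc j) * h \<le> real N * h" using that h by (intro mult_right_mono) auto
    then have sub: "{a + real j * h..a + real (Suc j) * h} \<subseteq> {a..b}"
      using h b by (auto simp: algebra_simps intro: order_trans)
    have "\<bar>g x - g (a + real j * h)\<bar> \<le> e" if "x \<in> {a + real j * h..a + real (Suc j) * h}" for x
    proof -
      have "a + real j * h \<in> {a + real j * h..a + real (Suc j) * h}"
        using h by (simp add: algebra_simps)
      then have "x \<in> {a..b}" "a + real j * h \<in> {a..b}"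
        using that sub by blast+
      moreover have "\<bar>x - (a + real j * h)\<bar> \<le> h"
        using that by (auto simp: algebra_simps)
      ultimately show ?thesis
        using modulus by (simp add: h_def)
    qed
    then show ?thesis
      using left_endpoint_integral_error_le[of "a + real j * h" "a + real (Suc j) * h" g e]
        continuous_on_subset[OF cont sub] h by (simp add: algebra_simps)
  qed
  have "\<bar>(\<Sum>j<N. h * g (a + real j * h)) - integral {a..b} g\<bar>
      = \<bar>\<Sum>j<N. h * g (a + real j * h) - integral {a + real j * h..a + real (Suc j) * h} g\<bar>"
    using integral_sum_cells[OF h, of a N g] cont b by (simp add: sum_subtractf)
  also have "\<dots> \<le> (\<Sum>j<N. e * h)"
    by (rule order_trans[OF sum_abs sum_mono]) (use cell in auto)
  also have "\<dots> = e * (b - a)" using N by (simp add: h_def)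
  finally show ?thesis
    by (simp add: h_def)
qed

lemma left_Riemann_sum_LIMSEQ:
  fixes g :: "real \<Rightarrow> real"
  assumes ab: "a \<le> b" and cont: "continuous_on {a..b} g"
  shows "(\<lambda>N. \<Sum>j<N. (b - a) / real N * g (a + real j * ((b - a) / real N))) \<longlonglongrightarrow> integral {a..b} g"
proof (rule LIMSEQ_I)
  fix r :: real assume r: "0 < r"
  define e where "e = r / (b - a + 1)"
  have e: "0 < e" "e * (b - a) < r" using r ab by (simp_all add: e_def field_simps)
  obtain d where d: "0 < d"
    and dd: "\<And>x y. x \<in> {a..b} \<Longrightarrow> y \<in> {a..b} \<Longrightarrow> dist x y < d \<Longrightarrow> dist (g x) (g y) < e"
    using compact_uniformly_continuous[OF cont compact_Icc] e(1) unfolding uniformly_continuous_on_def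
    by metis
  obtain N0 :: nat where N0: "(b - a) / d < real N0" using reals_Archimedean2 by blast
  have "norm ((\<Sum>j<N. (b - a) / real N * g (a + real j * ((b - a) / real N))) - integral {a..b} g) < r"
    if N: "Suc N0 \<le> N" for N
  proof -
    have "b - a < real N0 * d" using N0 d by (simp add: field_simps)
    also have "\<dots> \<le> real N * d" using N d by (intro mult_right_mono) auto
    finally have "(b - a) / real N < d" using N by (simp add: field_simps)
    then have "\<bar>(\<Sum>j<N. (b - a) / real N * g (a + real j * ((b - a) / real N))) - integral {a..b} g\<bar>
        \<le> e * (b - a)"
      using dd N by (intro left_Riemann_sum_error_le[OF ab _ cont] less_imp_le) (auto simp: dist_real_def)
    with e(2) show ?thesis by simp
  qed
  then show "\<exists>no. \<forall>N\<ge>no. norm ((\<Sum>j<N. (b - a) / real N * g (a + real j * ((b - a) / real N))) - integral {a..b} g) < r"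
    by blast
qed

lemma sum_exp_grid_le:
  fixes \<theta> h :: real
  assumes "\<theta> > 0" "h > 0"
  shows "(\<Sum>i<n. exp (- 2 * \<theta> * (real n * h - real (Suc i) * h))) * h \<le> 1 / (2 * \<theta>) + h"
proof -
  define r where "r = exp (- 2 * \<theta> * h)"
  have r0: "0 < r" and r1: "r < 1" using assms by (auto simp: r_def)
  have "(\<Sum>i<n. exp (- 2 * \<theta> * (real n * h - real (Suc i) * h))) = (\<Sum>i<n. r ^ (n - Suc i))"
  proof (intro sum.cong refl)
    fix i assume "i \<in> {..<n}"
    then have "real n * h - real (Suc i) * h = real (n - Suc i) * h"
      by (simp add: of_nat_diff algebra_simps)
    then show "exp (- 2 * \<theta> * (real n * h - real (Suc i) * h)) = r ^ (n - Suc i)"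
      by (simp add: r_def exp_of_nat_mult[symmetric] algebra_simps)
  qed
  also have "\<dots> = (\<Sum>i<n. r ^ i)" by (rule sum.nat_diff_reindex)
  also have "\<dots> = (1 - r ^ n) / (1 - r)" using r1 by (simp add: sum_gp_strict)
  also have "\<dots> \<le> 1 / (1 - r)" using r0 r1 by (simp add: divide_right_mono)
  finally have "(\<Sum>i<n. exp (- 2 * \<theta> * (real n * h - real (Suc i) * h))) * h \<le> 1 / (1 - r) * h"
    using assms(2) by (intro mult_right_mono) simp_all
  moreover have "r * (1 + 2 * \<theta> * h) \<le> r * exp (2 * \<theta> * h)"
    using r0 exp_ge_add_one_self[of "2 * \<theta> * h"] by simp
  then have "r * (1 + 2 * \<theta> * h) \<le> 1"
    by (simp add: r_def flip: exp_add)
  then have "h \<le> (1 - r) * (1 / (2 * \<theta>) + h)" using assms by (simp add: field_simps)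
  then have "1 / (1 - r) * h \<le> 1 / (2 * \<theta>) + h" using r1 by (simp add: divide_simps mult.commute)
  ultimately show ?thesis by linarith
qed

section \<open>Moments, independence and Fatou's lemma\<close>

lemma nn_integral_tendsto_le:
  fixes f :: "nat \<Rightarrow> 'a \<Rightarrow> ennreal" and B :: "nat \<Rightarrow> ennreal"
  assumes "\<And>L. f L \<in> borel_measurable M"
    and "\<And>\<omega>. \<omega> \<in> space M \<Longrightarrow> (\<lambda>L. f L \<omega>) \<longlonglongrightarrow> g \<omega>"
    and "\<And>L. (\<integral>\<^sup>+\<omega>. f L \<omega> \<partial>M) \<le> B L" and "B \<longlonglongrightarrow> b"
  shows "(\<integral>\<^sup>+\<omega>. g \<omega> \<partial>M) \<le> b"
proof -
  have "(\<integral>\<^sup>+\<omega>. g \<omega> \<partial>M) = (\<integral>\<^sup>+\<omega>. liminf (\<lambda>L. f L \<omega>) \<partial>M)"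
    using lim_imp_Liminf[OF sequentially_bot assms(2)] by (intro nn_integral_cong) simp
  also have "\<dots> \<le> liminf (\<lambda>L. \<integral>\<^sup>+\<omega>. f L \<omega> \<partial>M)"
    by (rule nn_integral_liminf) (rule assms(1))
  also have "\<dots> \<le> liminf B"
    by (intro Liminf_mono always_eventually allI assms(3))
  also have "\<dots> = b"
    using assms(4) by (rule lim_imp_Liminf[OF sequentially_bot])
  finally show ?thesis .
qed

lemma nn_integral_square_add_le:
  fixes u v :: "'a \<Rightarrow> real"
  assumes [measurable]: "u \<in> borel_measurable M" "v \<in> borel_measurable M"
  shows "(\<integral>\<^sup>+\<omega>. ennreal ((u \<omega> + v \<omega>)\<^sup>2) \<partial>M)
    \<le> 2 * (\<integral>\<^sup>+\<omega>. ennreal ((u \<omega>)\<^sup>2) \<partial>M) + 2 * (\<integral>\<^sup>+\<omega>. ennreal ((v \<omega>)\<^sup>2) \<partial>M)"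
proof -
  have "ennreal ((u \<omega> + v \<omega>)\<^sup>2) \<le> 2 * ennreal ((u \<omega>)\<^sup>2) + 2 * ennreal ((v \<omega>)\<^sup>2)" for \<omega>
  proof -
    have "(u \<omega> + v \<omega>)\<^sup>2 \<le> 2 * (u \<omega>)\<^sup>2 + 2 * (v \<omega>)\<^sup>2"
      using zero_le_power2[of "u \<omega> - v \<omega>"] by (simp add: power2_eq_square algebra_simps)
    then have "ennreal ((u \<omega> + v \<omega>)\<^sup>2) \<le> ennreal (2 * (u \<omega>)\<^sup>2 + 2 * (v \<omega>)\<^sup>2)"
      by (rule ennreal_leI)
    also have "\<dots> = 2 * ennreal ((u \<omega>)\<^sup>2) + 2 * ennreal ((v \<omega>)\<^sup>2)"
      by (simp add: ennreal_plus ennreal_mult)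
    finally show ?thesis .
  qed
  then have "(\<integral>\<^sup>+\<omega>. ennreal ((u \<omega> + v \<omega>)\<^sup>2) \<partial>M)
      \<le> (\<integral>\<^sup>+\<omega>. 2 * ennreal ((u \<omega>)\<^sup>2) + 2 * ennreal ((v \<omega>)\<^sup>2) \<partial>M)"
    by (intro nn_integral_mono)
  also have "\<dots> = 2 * (\<integral>\<^sup>+\<omega>. ennreal ((u \<omega>)\<^sup>2) \<partial>M) + 2 * (\<integral>\<^sup>+\<omega>. ennreal ((v \<omega>)\<^sup>2) \<partial>M)"
    by (simp add: nn_integral_add nn_integral_cmult)
  finally show ?thesis .
qed

lemma (in prob_space) indep_var_commute:
  assumes "indep_var S X T Y"
  shows "indep_var T Y S X"
proof -
  note indep = assms[unfolded indep_var_eq indep_sets2_eq]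
  show ?thesis
    unfolding indep_var_eq indep_sets2_eq
  proof (intro conjI ballI)
    fix a b
    assume "a \<in> sigma_sets (space M) {Y -` A \<inter> space M |A. A \<in> sets T}"
      and "b \<in> sigma_sets (space M) {X -` A \<inter> space M |A. A \<in> sets S}"
    with indep have "prob (b \<inter> a) = prob b * prob a" by blast
    then show "prob (a \<inter> b) = prob a * prob b" by (simp add: Int_commute mult.commute)
  qed (use indep in auto)
qed

lemma (in prob_space) indep_var_nn_integral_mult:
  fixes X Y :: "'a \<Rightarrow> ennreal"
  assumes "indep_var borel X borel Y"
  shows "(\<integral>\<^sup>+\<omega>. X \<omega> * Y \<omega> \<partial>M) = (\<integral>\<^sup>+\<omega>. X \<omega> \<partial>M) * (\<integral>\<^sup>+\<omega>. Y \<omega> \<partial>M)"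
proof -
  have "case_bool borel borel = (\<lambda>_. borel :: ennreal measure)"
    by (rule ext) (simp split: bool.split)
  then have "indep_vars (\<lambda>_. borel) (case_bool X Y) UNIV"
    using assms unfolding indep_var_def by simp
  then have "(\<integral>\<^sup>+\<omega>. (\<Prod>i\<in>UNIV. case_bool X Y i \<omega>) \<partial>M) = (\<Prod>i\<in>UNIV. \<integral>\<^sup>+\<omega>. case_bool X Y i \<omega> \<partial>M)"
    by (intro indep_vars_nn_integral) auto
  then show ?thesis by (simp add: UNIV_bool mult.commute)
qed

lemma (in prob_space) normal_distributed_moments:
  assumes "\<sigma> > 0" "distributed M lborel Z (normal_density 0 \<sigma>)"
  shows "integrable M Z" "expectation Z = 0"
    "integrable M (\<lambda>\<omega>. (Z \<omega>)\<^sup>2)" "expectation (\<lambda>\<omega>. (Z \<omega>)\<^sup>2) = \<sigma>\<^sup>2"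
proof -
  show "integrable M Z"
    using distributed_integrable[OF assms(2), of "\<lambda>x. x"] integrable_normal_moment[OF assms(1), of 0 1]
    by simp
  show "integrable M (\<lambda>\<omega>. (Z \<omega>)\<^sup>2)"
    using distributed_integrable[OF assms(2), of "\<lambda>x. x\<^sup>2"] integrable_normal_moment[OF assms(1), of 0 2]
    by simp
  show "expectation Z = 0"
    by (rule normal_distributed_expectation[OF assms])
  then show "expectation (\<lambda>\<omega>. (Z \<omega>)\<^sup>2) = \<sigma>\<^sup>2"
    using normal_distributed_variance[OF assms] by simp
qed

lemma (in prob_space) indep_vars_expectation_mult:
  fixes Z :: "'i \<Rightarrow> 'a \<Rightarrow> real"
  assumes "indep_vars (\<lambda>_. borel) Z I" "i \<in> I" "j \<in> I" "i \<noteq> j"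
    and "integrable M (Z i)" "integrable M (Z j)"
  shows "integrable M (\<lambda>\<omega>. Z i \<omega> * Z j \<omega>)"
    and "expectation (\<lambda>\<omega>. Z i \<omega> * Z j \<omega>) = expectation (Z i) * expectation (Z j)"
proof -
  have ind: "indep_vars (\<lambda>_. borel) Z {i, j}"
    by (rule indep_vars_subset[OF assms(1)]) (use assms in auto)
  have int: "\<And>k. k \<in> {i, j} \<Longrightarrow> integrable M (Z k)"
    using assms by auto
  show "integrable M (\<lambda>\<omega>. Z i \<omega> * Z j \<omega>)"
    using indep_vars_integrable[OF _ ind int] assms(4) by simp
  show "expectation (\<lambda>\<omega>. Z i \<omega> * Z j \<omega>) = expectation (Z i) * expectation (Z j)"
    using indep_vars_lebesgue_integral[OF _ ind int] assms(4) by simp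
qed

lemma (in prob_space) nn_integral_square_indep_sum:
  fixes Z :: "'i \<Rightarrow> 'a \<Rightarrow> real"
  assumes I: "finite I" and ind: "indep_vars (\<lambda>_. borel) Z I"
    and int: "\<And>i. i \<in> I \<Longrightarrow> integrable M (Z i)" "\<And>i. i \<in> I \<Longrightarrow> integrable M (\<lambda>\<omega>. (Z i \<omega>)\<^sup>2)"
    and mom: "\<And>i. i \<in> I \<Longrightarrow> expectation (Z i) = 0" "\<And>i. i \<in> I \<Longrightarrow> expectation (\<lambda>\<omega>. (Z i \<omega>)\<^sup>2) = v"
  shows "(\<integral>\<^sup>+\<omega>. ennreal ((\<Sum>i\<in>I. d i * Z i \<omega>)\<^sup>2) \<partial>M) = ennreal ((\<Sum>i\<in>I. (d i)\<^sup>2) * v)"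
proof -
  have pair: "integrable M (\<lambda>\<omega>. Z i \<omega> * Z j \<omega>)
      \<and> expectation (\<lambda>\<omega>. Z i \<omega> * Z j \<omega>) = (if i = j then v else 0)"
    if "i \<in> I" "j \<in> I" for i j
    using that int mom indep_vars_expectation_mult[OF ind that]
    by (cases "i = j") (simp_all add: power2_eq_square)
  have sq: "(\<Sum>i\<in>I. d i * Z i \<omega>)\<^sup>2 = (\<Sum>i\<in>I. \<Sum>j\<in>I. d i * d j * (Z i \<omega> * Z j \<omega>))" for \<omega>
    by (simp add: power2_eq_square sum_product algebra_simps)
  have integrable: "integrable M (\<lambda>\<omega>. \<Sum>j\<in>I. d i * d j * (Z i \<omega> * Z j \<omega>))" if "i \<in> I" for i
    using pair that by (intro Bochner_Integration.integrable_sum integrable_mult_right) auto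
  have "expectation (\<lambda>\<omega>. (\<Sum>i\<in>I. d i * Z i \<omega>)\<^sup>2)
      = (\<Sum>i\<in>I. \<Sum>j\<in>I. d i * d j * expectation (\<lambda>\<omega>. Z i \<omega> * Z j \<omega>))"
    unfolding sq using pair integrable
    by (subst Bochner_Integration.integral_sum, simp, intro sum.cong refl Bochner_Integration.integral_sum)
       (auto intro!: integrable_mult_right)
  also have "\<dots> = (\<Sum>i\<in>I. \<Sum>j\<in>I. d i * d j * (if i = j then v else 0))"
    using pair by (intro sum.cong refl) auto
  also have "\<dots> = (\<Sum>i\<in>I. (d i)\<^sup>2 * v)"
    using I by (simp add: power2_eq_square if_distrib sum.delta cong: if_cong)
  finally have "expectation (\<lambda>\<omega>. (\<Sum>i\<in>I. d i * Z i \<omega>)\<^sup>2) = (\<Sum>i\<in>I. (d i)\<^sup>2) * v"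
    by (simp add: sum_distrib_right)
  moreover have "integrable M (\<lambda>\<omega>. (\<Sum>i\<in>I. d i * Z i \<omega>)\<^sup>2)"
    unfolding sq using integrable by (rule Bochner_Integration.integrable_sum)
  ultimately show ?thesis
    by (simp add: nn_integral_eq_integral)
qed

section \<open>Wiener sums of Brownian motions\<close>

lemma std_brownian_motion_prob_space: "std_brownian_motion M W \<Longrightarrow> prob_space M"
  by (simp add: std_brownian_motion_def)

lemma std_brownian_motion_measurable[measurable_dest]:
  "std_brownian_motion M W \<Longrightarrow> W t \<in> borel_measurable M"
  by (simp add: std_brownian_motion_def)

lemma std_brownian_motion_continuous_on:
  "std_brownian_motion M W \<Longrightarrow> \<omega> \<in> space M \<Longrightarrow> continuous_on {0..} (\<lambda>t. W t \<omega>)"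
  by (simp add: std_brownian_motion_def)

lemma std_brownian_motion_at_0:
  "std_brownian_motion M W \<Longrightarrow> \<omega> \<in> space M \<Longrightarrow> W 0 \<omega> = 0"
  by (simp add: std_brownian_motion_def)

lemma std_brownian_motion_grid_increments_indep:
  assumes "std_brownian_motion M W" "h > 0"
  shows "prob_space.indep_vars M (\<lambda>_. borel) (\<lambda>i \<omega>. W (real (Suc i) * h) \<omega> - W (real i * h) \<omega>) {..<N}"
proof -
  have "\<forall>(ts :: nat \<Rightarrow> real) k. 0 \<le> ts 0 \<longrightarrow> (\<forall>i<k. ts i < ts (Suc i)) \<longrightarrow>
        prob_space.indep_vars M (\<lambda>_. borel) (\<lambda>i \<omega>. W (ts (Suc i)) \<omega> - W (ts i) \<omega>) {..<k}"
    using assms(1) by (simp add: std_brownian_motion_def)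
  from this[rule_format, of "\<lambda>i. real i * h" N] assms(2) show ?thesis
    by simp
qed

lemma std_brownian_motion_grid_increment_distributed:
  assumes "std_brownian_motion M W" "h > 0"
  shows "distributed M lborel (\<lambda>\<omega>. W (real (Suc i) * h) \<omega> - W (real i * h) \<omega>) (normal_density 0 (sqrt h))"
proof -
  have "\<forall>s t. 0 \<le> s \<longrightarrow> s < t \<longrightarrow>
        distributed M lborel (\<lambda>\<omega>. W t \<omega> - W s \<omega>) (normal_density 0 (sqrt (t - s)))"
    using assms(1) by (simp add: std_brownian_motion_def)
  from this[rule_format, of "real i * h" "real (Suc i) * h"] assms(2) show ?thesis
    by (simp add: algebra_simps)
qed

lemma indep_processes_commute:
  assumes "prob_space M" "indep_processes M W1 W2"
  shows "indep_processes M W2 W1"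
  using assms prob_space.indep_var_commute unfolding indep_processes_def by blast

text \<open>The Wiener integral of the step function equal to \<open>c i\<close> on \<open>[i h, (i + 1) h)\<close>.\<close>

definition wiener_sum :: "(nat \<Rightarrow> real) \<Rightarrow> (real \<Rightarrow> 'a \<Rightarrow> real) \<Rightarrow> real \<Rightarrow> nat \<Rightarrow> 'a \<Rightarrow> real" where
  "wiener_sum c W h N \<omega> = (\<Sum>i<N. c i * (W (real (Suc i) * h) \<omega> - W (real i * h) \<omega>))"

lemma wiener_sum_measurable[measurable_dest]:
  assumes "std_brownian_motion M W"
  shows "wiener_sum c W h N \<in> borel_measurable M"
  unfolding wiener_sum_def[abs_def] using assms by measurable

lemma wiener_sum_diff:
  "wiener_sum c W h N \<omega> - wiener_sum d W h N \<omega> = wiener_sum (\<lambda>i. c i - d i) W h N \<omega>"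
  by (simp add: wiener_sum_def sum_subtractf left_diff_distrib)

lemma wiener_sum_trailing_zeros:
  assumes "n \<le> N" "\<And>i. n \<le> i \<Longrightarrow> c i = 0"
  shows "wiener_sum c W h N \<omega> = wiener_sum c W h n \<omega>"
  unfolding wiener_sum_def using assms by (intro sum.mono_neutral_right) auto

lemma nn_integral_wiener_sum_square:
  assumes "std_brownian_motion M W" "h > 0"
  shows "(\<integral>\<^sup>+\<omega>. ennreal ((wiener_sum c W h N \<omega>)\<^sup>2) \<partial>M) = ennreal ((\<Sum>i<N. (c i)\<^sup>2) * h)"
proof -
  interpret prob_space M
    by (rule std_brownian_motion_prob_space[OF assms(1)])
  note moments = normal_distributed_moments[OF _ std_brownian_motion_grid_increment_distributed[OF assms]]
  show ?thesis
    unfolding wiener_sum_def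
    by (rule nn_integral_square_indep_sum[OF _ std_brownian_motion_grid_increments_indep[OF assms]])
       (use moments assms(2) in auto)
qed

lemma indep_var_wiener_sums:
  assumes "prob_space M" "indep_processes M W1 W2" "h > 0"
  shows "prob_space.indep_var M borel (wiener_sum c W1 h N) borel (wiener_sum d W2 h N)"
proof -
  interpret prob_space M by (rule assms(1))
  define J where "J = (\<lambda>i. real i * h) ` {..N}"
  have J: "finite J" "J \<subseteq> {0..}" using assms(3) by (auto simp: J_def)
  have inJ: "\<And>i. i \<le> N \<Longrightarrow> real i * h \<in> J" by (auto simp: J_def)
  define F where "F c x = (\<Sum>i<N. c i * (x (real (Suc i) * h) - x (real i * h)))"
    for c :: "nat \<Rightarrow> real" and x :: "real \<Rightarrow> real"
  have F_measurable: "F c \<in> borel_measurable (PiM J (\<lambda>_. borel))" for c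
    unfolding F_def[abs_def] using inJ
    by (intro borel_measurable_sum borel_measurable_times borel_measurable_diff borel_measurable_const
        measurable_component_singleton) (auto simp del: of_nat_Suc)
  have F_restrict: "F c \<circ> (\<lambda>\<omega>. restrict (\<lambda>t. W t \<omega>) J) = wiener_sum c W h N"
    for c and W :: "real \<Rightarrow> 'a \<Rightarrow> real"
    using inJ by (auto simp: F_def wiener_sum_def fun_eq_iff simp del: of_nat_Suc intro!: sum.cong)
  have "indep_var (PiM J (\<lambda>_. borel)) (\<lambda>\<omega>. restrict (\<lambda>t. W1 t \<omega>) J)
                  (PiM J (\<lambda>_. borel)) (\<lambda>\<omega>. restrict (\<lambda>t. W2 t \<omega>) J)"
    using assms(2) J unfolding indep_processes_def by blast
  from indep_var_compose[OF this F_measurable F_measurable] show ?thesis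
    unfolding F_restrict .
qed

lemma nn_integral_wiener_sums_product_square:
  assumes "std_brownian_motion M W1" "std_brownian_motion M W2" "indep_processes M W1 W2" "h > 0"
  shows "(\<integral>\<^sup>+\<omega>. ennreal ((wiener_sum c W1 h N \<omega> * wiener_sum d W2 h N \<omega>)\<^sup>2) \<partial>M)
    = ennreal ((\<Sum>i<N. (c i)\<^sup>2) * h * ((\<Sum>i<N. (d i)\<^sup>2) * h))"
proof -
  interpret prob_space M
    by (rule std_brownian_motion_prob_space[OF assms(1)])
  have square_measurable: "(\<lambda>x. ennreal (x\<^sup>2)) \<in> borel_measurable (borel :: real measure)"
    by measurable
  have "indep_var borel ((\<lambda>x. ennreal (x\<^sup>2)) \<circ> wiener_sum c W1 h N)
                  borel ((\<lambda>x. ennreal (x\<^sup>2)) \<circ> wiener_sum d W2 h N)"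
    by (rule indep_var_compose[OF indep_var_wiener_sums[OF prob_space_axioms assms(3,4)]
          square_measurable square_measurable])
  from indep_var_nn_integral_mult[OF this]
  have "(\<integral>\<^sup>+\<omega>. ennreal ((wiener_sum c W1 h N \<omega>)\<^sup>2) * ennreal ((wiener_sum d W2 h N \<omega>)\<^sup>2) \<partial>M)
      = ennreal ((\<Sum>i<N. (c i)\<^sup>2) * h) * ennreal ((\<Sum>i<N. (d i)\<^sup>2) * h)"
    by (simp add: nn_integral_wiener_sum_square[OF assms(1,4)] nn_integral_wiener_sum_square[OF assms(2,4)])
  moreover have "0 \<le> (\<Sum>i<N. (c i)\<^sup>2) * h" "0 \<le> (\<Sum>i<N. (d i)\<^sup>2) * h"
    using assms(4) by (simp_all add: sum_nonneg)
  ultimately show ?thesis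
    by (simp add: power_mult_distrib ennreal_mult)
qed

lemma nn_integral_square_product_of_wiener_limits_le:
  fixes F1 F2 :: "'a \<Rightarrow> real" and h B1 B2 :: "nat \<Rightarrow> real"
  assumes "std_brownian_motion M W1" "std_brownian_motion M W2" "indep_processes M W1 W2"
    and h: "\<And>L. h L > 0"
    and lim1: "\<And>\<omega>. \<omega> \<in> space M \<Longrightarrow> (\<lambda>L. wiener_sum (c L) W1 (h L) (N L) \<omega>) \<longlonglongrightarrow> F1 \<omega>"
    and lim2: "\<And>\<omega>. \<omega> \<in> space M \<Longrightarrow> (\<lambda>L. wiener_sum (d L) W2 (h L) (N L) \<omega>) \<longlonglongrightarrow> F2 \<omega>"
    and bound1: "\<And>L. (\<Sum>i<N L. (c L i)\<^sup>2) * h L \<le> B1 L" "B1 \<longlonglongrightarrow> b1"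
    and bound2: "\<And>L. (\<Sum>i<N L. (d L i)\<^sup>2) * h L \<le> B2 L" "B2 \<longlonglongrightarrow> b2"
  shows "(\<integral>\<^sup>+\<omega>. ennreal ((F1 \<omega> * F2 \<omega>)\<^sup>2) \<partial>M) \<le> ennreal (b1 * b2)"
proof (rule nn_integral_tendsto_le)
  have "0 \<le> B1 L" "0 \<le> B2 L" for L
    using order_trans[OF _ bound1(1)] order_trans[OF _ bound2(1)] h[of L]
    by (simp_all add: sum_nonneg)
  then show "(\<integral>\<^sup>+\<omega>. ennreal ((wiener_sum (c L) W1 (h L) (N L) \<omega> * wiener_sum (d L) W2 (h L) (N L) \<omega>)\<^sup>2) \<partial>M)
      \<le> ennreal (B1 L * B2 L)" for L
    unfolding nn_integral_wiener_sums_product_square[OF assms(1-3) h]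
    using bound1(1)[of L] bound2(1)[of L] h[of L]
    by (intro ennreal_leI mult_mono) (auto intro!: mult_nonneg_nonneg sum_nonneg)
  show "(\<lambda>\<omega>. ennreal ((wiener_sum (c L) W1 (h L) (N L) \<omega> * wiener_sum (d L) W2 (h L) (N L) \<omega>)\<^sup>2))
      \<in> borel_measurable M" for L
    using assms(1,2) by measurable
  show "(\<lambda>L. ennreal ((wiener_sum (c L) W1 (h L) (N L) \<omega> * wiener_sum (d L) W2 (h L) (N L) \<omega>)\<^sup>2))
      \<longlonglongrightarrow> ennreal ((F1 \<omega> * F2 \<omega>)\<^sup>2)" if "\<omega> \<in> space M" for \<omega>
    using lim1[OF that] lim2[OF that] by (intro tendsto_ennrealI tendsto_intros)
  show "(\<lambda>L. ennreal (B1 L * B2 L)) \<longlonglongrightarrow> ennreal (b1 * b2)"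
    using bound1(2) bound2(2) by (intro tendsto_ennrealI tendsto_mult)
qed

section \<open>The Ornstein--Uhlenbeck process as a limit of Wiener sums\<close>

text \<open>The kernel \<open>exp (- \<theta> * (t - u))\<close> of \<open>ou_process \<theta> W t\<close> for \<open>t = n h\<close>, taken at the
  right end points \<open>u = (i + 1) h\<close> of the grid cells and extended by zero for \<open>i \<ge> n\<close>.\<close>

definition ou_coeff :: "real \<Rightarrow> real \<Rightarrow> nat \<Rightarrow> nat \<Rightarrow> real" where
  "ou_coeff \<theta> h n i = (if i < n then exp (- \<theta> * (real n * h - real (Suc i) * h)) else 0)"

lemma sum_by_parts:
  fixes g w :: "nat \<Rightarrow> 'a::comm_ring"
  shows "(\<Sum>i<N. g (Suc i) * (w (Suc i) - w i)) = g N * w N - g 0 * w 0 - (\<Sum>i<N. (g (Suc i) - g i) * w i)"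
  by (induction N) (simp_all add: algebra_simps)

lemma wiener_sum_ou_coeff_by_parts:
  assumes "\<theta> * h \<noteq> 0" "W 0 \<omega> = 0"
  shows "wiener_sum (ou_coeff \<theta> h N) W h N \<omega>
    = W (real N * h) \<omega> - (exp (\<theta> * h) - 1) / (\<theta> * h) *
        (\<Sum>j<N. h * (\<theta> * exp (- \<theta> * (real N * h - real j * h)) * W (real j * h) \<omega>))"
proof -
  define g where "g i = exp (- \<theta> * (real N * h - real i * h))" for i
  define w where "w i = W (real i * h) \<omega>" for i
  have g_Suc: "g (Suc i) - g i = (exp (\<theta> * h) - 1) * g i" for i
    by (simp add: g_def algebra_simps flip: exp_add)
  have "(\<Sum>i<N. h * (\<theta> * g i * w i)) = \<theta> * h * (\<Sum>i<N. g i * w i)"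
    by (simp add: sum_distrib_left mult_ac)
  then have parts: "(\<Sum>i<N. (g (Suc i) - g i) * w i)
      = (exp (\<theta> * h) - 1) / (\<theta> * h) * (\<Sum>i<N. h * (\<theta> * g i * w i))"
    using assms(1) by (simp add: g_Suc sum_distrib_left mult_ac)
  have "wiener_sum (ou_coeff \<theta> h N) W h N \<omega> = (\<Sum>i<N. g (Suc i) * (w (Suc i) - w i))"
    by (simp add: wiener_sum_def ou_coeff_def g_def w_def)
  also have "\<dots> = g N * w N - g 0 * w 0 - (\<Sum>i<N. (g (Suc i) - g i) * w i)"
    by (rule sum_by_parts)
  also have "\<dots> = w N - (exp (\<theta> * h) - 1) / (\<theta> * h) * (\<Sum>i<N. h * (\<theta> * g i * w i))"
    using assms(2) by (simp add: parts, simp add: g_def w_def)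
  finally show ?thesis
    by (simp add: g_def w_def)
qed

lemma LIMSEQ_exp_minus_one_quotient:
  assumes "c > 0"
  shows "(\<lambda>N. (exp (c / real N) - 1) / (c / real N)) \<longlonglongrightarrow> 1"
proof -
  have "((\<lambda>z::real. (exp z - 1) / z) \<longlongrightarrow> 1) (at_right 0)"
    by (rule tendsto_mono[OF _ lim_exp_minus_1]) (simp add: at_within_le_at)
  moreover have "filterlim (\<lambda>N. c / real N) (at_right 0) sequentially"
    using assms
    by (intro tendsto_imp_filterlim_at_right lim_const_over_n eventually_sequentiallyI[of 1]) auto
  ultimately show ?thesis
    by (rule filterlim_compose)
qed

lemma ou_process_wiener_sum_LIMSEQ:
  assumes "\<theta> > 0" "t \<ge> 0" "W 0 \<omega> = 0" "continuous_on {0..} (\<lambda>u. W u \<omega>)"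
  shows "(\<lambda>N. wiener_sum (ou_coeff \<theta> (t / real N) N) W (t / real N) N \<omega>) \<longlonglongrightarrow> ou_process \<theta> W t \<omega>"
proof (cases "t = 0")
  case True
  then show ?thesis by (simp add: wiener_sum_def ou_process_def assms(3))
next
  case False
  then have t: "t > 0" using assms(2) by simp
  define G where "G u = \<theta> * exp (- \<theta> * (t - u)) * W u \<omega>" for u
  have "continuous_on {0..t} G"
    unfolding G_def by (intro continuous_intros continuous_on_subset[OF assms(4)]) auto
  from left_Riemann_sum_LIMSEQ[OF assms(2) this]
    LIMSEQ_exp_minus_one_quotient[of "\<theta> * t"]
  have "(\<lambda>N. W t \<omega> - (exp (\<theta> * t / real N) - 1) / (\<theta> * t / real N) *
      (\<Sum>j<N. t / real N * G (real j * (t / real N)))) \<longlonglongrightarrow> W t \<omega> - 1 * integral {0..t} G"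
    using assms(1) t by (intro tendsto_intros) auto
  moreover have "\<forall>\<^sub>F N in sequentially. W t \<omega> - (exp (\<theta> * t / real N) - 1) / (\<theta> * t / real N) *
      (\<Sum>j<N. t / real N * G (real j * (t / real N)))
    = wiener_sum (ou_coeff \<theta> (t / real N) N) W (t / real N) N \<omega>"
  proof (rule eventually_sequentiallyI[of 1])
    fix N :: nat assume "1 \<le> N"
    then show "W t \<omega> - (exp (\<theta> * t / real N) - 1) / (\<theta> * t / real N) *
        (\<Sum>j<N. t / real N * G (real j * (t / real N)))
      = wiener_sum (ou_coeff \<theta> (t / real N) N) W (t / real N) N \<omega>"
      using wiener_sum_ou_coeff_by_parts[of \<theta> "t / real N" W \<omega> N] assms(1,3) t
      by (simp add: G_def)
  qed
  ultimately show ?thesis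
    unfolding ou_process_def G_def by (simp add: Lim_transform_eventually)
qed

text \<open>The times \<open>real P * s\<close> for all \<open>P\<close> lie on the common grids of mesh \<open>s / (L + 1)\<close>, so the
  Wiener sums approximating the process at several such times can be combined linearly.\<close>

lemma ou_process_grid_LIMSEQ:
  assumes "std_brownian_motion M W" "\<omega> \<in> space M" "\<theta> > 0" "s > 0" "P \<le> G"
  shows "(\<lambda>L. wiener_sum (ou_coeff \<theta> (s / real (Suc L)) (P * Suc L)) W (s / real (Suc L)) (G * Suc L) \<omega>)
    \<longlonglongrightarrow> ou_process \<theta> W (real P * s) \<omega>"
proof -
  have trailing: "wiener_sum (ou_coeff \<theta> h (P * Suc L)) W h (G * Suc L) \<omega>
      = wiener_sum (ou_coeff \<theta> h (P * Suc L)) W h (P * Suc L) \<omega>" for h L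
    using mult_le_mono1[OF assms(5), of "Suc L"] by (intro wiener_sum_trailing_zeros) (auto simp: ou_coeff_def)
  show ?thesis
  proof (cases "P = 0")
    case True
    then show ?thesis
      using std_brownian_motion_at_0[OF assms(1,2)] by (simp add: wiener_sum_def ou_process_def ou_coeff_def)
  next
    case False
    have "(\<lambda>N. wiener_sum (ou_coeff \<theta> (real P * s / real N) N) W (real P * s / real N) N \<omega>)
        \<longlonglongrightarrow> ou_process \<theta> W (real P * s) \<omega>"
      using assms(3,4) std_brownian_motion_at_0[OF assms(1,2)] std_brownian_motion_continuous_on[OF assms(1,2)]
      by (intro ou_process_wiener_sum_LIMSEQ) auto
    moreover have "strict_mono (\<lambda>L. P * Suc L)"
      using False by (auto simp: strict_mono_Suc_iff)
    ultimately have "(\<lambda>L. wiener_sum (ou_coeff \<theta> (real P * s / real (P * Suc L)) (P * Suc L)) W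
        (real P * s / real (P * Suc L)) (P * Suc L) \<omega>) \<longlonglongrightarrow> ou_process \<theta> W (real P * s) \<omega>"
      by (rule LIMSEQ_subseq_LIMSEQ[unfolded o_def])
    moreover have "real P * s / real (P * Suc L) = s / real (Suc L)" for L
      using False mult_divide_mult_cancel_left[of "real P" s "real (Suc L)"] by (simp only: of_nat_mult)
    ultimately show ?thesis
      unfolding trailing by simp
  qed
qed

lemma ou_process_measurable:
  assumes "std_brownian_motion M W" "\<theta> > 0"
  shows "ou_process \<theta> W t \<in> borel_measurable M"
proof (cases "t \<ge> 0")
  case True
  show ?thesis
  proof (rule borel_measurable_LIMSEQ_metric)
    show "wiener_sum (ou_coeff \<theta> (t / real N) N) W (t / real N) N \<in> borel_measurable M" for N
      using assms(1) by measurable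
    show "(\<lambda>N. wiener_sum (ou_coeff \<theta> (t / real N) N) W (t / real N) N \<omega>) \<longlonglongrightarrow> ou_process \<theta> W t \<omega>"
      if "\<omega> \<in> space M" for \<omega>
      using assms(2) True std_brownian_motion_at_0[OF assms(1) that]
        std_brownian_motion_continuous_on[OF assms(1) that]
      by (rule ou_process_wiener_sum_LIMSEQ)
  qed
next
  case False
  then have "ou_process \<theta> W t = W t"
    by (simp add: ou_process_def fun_eq_iff)
  then show ?thesis
    using assms(1) by simp
qed

lemma ou_process_continuous_on:
  assumes "continuous_on {0..} (\<lambda>u. W u \<omega>)"
  shows "continuous_on {0..T} (\<lambda>t. ou_process \<theta> W t \<omega>)"
proof -
  have "ou_process \<theta> W t \<omega>
      = W t \<omega> - \<theta> * exp (- \<theta> * t) * integral {0..t} (\<lambda>u. exp (\<theta> * u) * W u \<omega>)" for t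
  proof -
    have "(\<lambda>u. \<theta> * exp (- \<theta> * (t - u)) * W u \<omega>) = (\<lambda>u. (\<theta> * exp (- \<theta> * t)) * (exp (\<theta> * u) * W u \<omega>))"
      by (rule ext) (simp add: algebra_simps flip: exp_add)
    then show ?thesis by (simp add: ou_process_def)
  qed
  moreover have "continuous_on {0..T} (\<lambda>t. integral {0..t} (\<lambda>u. exp (\<theta> * u) * W u \<omega>))"
    by (intro indefinite_integral_continuous_1 integrable_continuous_interval continuous_intros
        continuous_on_subset[OF assms]) auto
  ultimately show ?thesis
    by (auto intro!: continuous_intros continuous_on_subset[OF assms])
qed

lemma sum_ou_coeff_square_le:
  assumes "\<theta> > 0" "h > 0" "n \<le> G"
  shows "(\<Sum>i<G. (ou_coeff \<theta> h n i)\<^sup>2) * h \<le> 1 / (2 * \<theta>) + h"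
proof -
  have "(\<Sum>i<G. (ou_coeff \<theta> h n i)\<^sup>2) = (\<Sum>i<n. (ou_coeff \<theta> h n i)\<^sup>2)"
    using assms(3) by (intro sum.mono_neutral_right) (auto simp: ou_coeff_def)
  also have "\<dots> = (\<Sum>i<n. exp (- 2 * \<theta> * (real n * h - real (Suc i) * h)))"
    by (intro sum.cong refl) (simp add: ou_coeff_def power2_eq_square algebra_simps flip: exp_add)
  finally show ?thesis
    using sum_exp_grid_le[OF assms(1,2), of n] by simp
qed

lemma ou_coeff_diff_square_le:
  assumes "\<theta> \<ge> 0" "h \<ge> 0" "K \<le> N"
  shows "(ou_coeff \<theta> h K i - ou_coeff \<theta> h N i)\<^sup>2
    \<le> (1 - exp (- \<theta> * ((real N - real K) * h)))\<^sup>2 * (ou_coeff \<theta> h K i)\<^sup>2 + (if i \<in> {K..<N} then 1 else 0)"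
proof (cases "i < K")
  case True
  then have "ou_coeff \<theta> h N i = exp (- \<theta> * ((real N - real K) * h)) * ou_coeff \<theta> h K i"
    using assms(3) by (simp add: ou_coeff_def algebra_simps flip: exp_add)
  then show ?thesis
    using True by (simp add: power2_eq_square algebra_simps)
next
  case False
  have "real (Suc i) * h \<le> real N * h" if "i < N"
    using that assms(2) by (intro mult_right_mono) auto
  then have "(ou_coeff \<theta> h N i)\<^sup>2 \<le> (if i \<in> {K..<N} then 1 else 0)"
    using False assms(1) by (auto simp: ou_coeff_def power_le_one_iff mult_nonneg_nonneg)
  then show ?thesis
    using False by (simp add: ou_coeff_def)
qed

lemma sum_ou_coeff_diff_square_le:
  assumes "\<theta> > 0" "h > 0" "K \<le> N" "N \<le> G"
  shows "(\<Sum>i<G. (ou_coeff \<theta> h K i - ou_coeff \<theta> h N i)\<^sup>2) * h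
    \<le> (1 - exp (- \<theta> * ((real N - real K) * h)))\<^sup>2 * (1 / (2 * \<theta>) + h) + (real N - real K) * h"
proof -
  define q where "q = exp (- \<theta> * ((real N - real K) * h))"
  have pointwise: "(ou_coeff \<theta> h K i - ou_coeff \<theta> h N i)\<^sup>2
      \<le> (1 - q)\<^sup>2 * (ou_coeff \<theta> h K i)\<^sup>2 + (if i \<in> {K..<N} then 1 else 0)" for i
    unfolding q_def using assms(1-3) by (intro ou_coeff_diff_square_le) auto
  have "(\<Sum>i<G. (if i \<in> {K..<N} then 1 else 0)) = (\<Sum>i\<in>{K..<N}. 1 :: real)"
    using assms(4) by (intro sum.mono_neutral_cong_right) auto
  then have "(\<Sum>i<G. (if i \<in> {K..<N} then 1 else 0)) = real N - real K"
    using assms(3) by (simp add: of_nat_diff)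
  moreover have "(\<Sum>i<G. (ou_coeff \<theta> h K i - ou_coeff \<theta> h N i)\<^sup>2)
      \<le> (\<Sum>i<G. (1 - q)\<^sup>2 * (ou_coeff \<theta> h K i)\<^sup>2 + (if i \<in> {K..<N} then 1 else 0))"
    by (rule sum_mono) (rule pointwise)
  ultimately have "(\<Sum>i<G. (ou_coeff \<theta> h K i - ou_coeff \<theta> h N i)\<^sup>2)
      \<le> (1 - q)\<^sup>2 * (\<Sum>i<G. (ou_coeff \<theta> h K i)\<^sup>2) + (real N - real K)"
    by (simp add: sum.distrib sum_distrib_left)
  then have "(\<Sum>i<G. (ou_coeff \<theta> h K i - ou_coeff \<theta> h N i)\<^sup>2) * h
      \<le> ((1 - q)\<^sup>2 * (\<Sum>i<G. (ou_coeff \<theta> h K i)\<^sup>2) + (real N - real K)) * h"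
    using assms(2) by (intro mult_right_mono) auto
  also have "\<dots> = (1 - q)\<^sup>2 * ((\<Sum>i<G. (ou_coeff \<theta> h K i)\<^sup>2) * h) + (real N - real K) * h"
    by (simp add: algebra_simps)
  also have "\<dots> \<le> (1 - q)\<^sup>2 * (1 / (2 * \<theta>) + h) + (real N - real K) * h"
    using sum_ou_coeff_square_le[OF assms(1,2)] assms(3,4) by (simp add: mult_left_mono)
  finally show ?thesis
    unfolding q_def .
qed

section \<open>Increments of the product process\<close>

lemma nn_integral_ou_times_ou_increment_le:
  assumes W1: "std_brownian_motion M W1" and W2: "std_brownian_motion M W2"
    and indep: "indep_processes M W1 W2" and "\<theta> > 0" "s > 0" "K \<le> N" "P \<le> N"
  shows "(\<integral>\<^sup>+\<omega>. ennreal ((ou_process \<theta> W1 (real P * s) \<omega> *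
      (ou_process \<theta> W2 (real K * s) \<omega> - ou_process \<theta> W2 (real N * s) \<omega>))\<^sup>2) \<partial>M)
    \<le> ennreal (1 / (2 * \<theta>) *
      ((1 - exp (- \<theta> * ((real N - real K) * s)))\<^sup>2 * (1 / (2 * \<theta>)) + (real N - real K) * s))"
proof -
  define h where "h L = s / real (Suc L)" for L :: nat
  define G where "G L = N * Suc L" for L :: nat
  define c where "c L = ou_coeff \<theta> (h L) (P * Suc L)" for L
  define d where "d L i = ou_coeff \<theta> (h L) (K * Suc L) i - ou_coeff \<theta> (h L) (N * Suc L) i" for L i
  have h: "h L > 0" for L
    using assms(5) by (simp add: h_def)
  have h_lim: "h \<longlonglongrightarrow> 0"
    unfolding h_def using LIMSEQ_Suc[OF lim_const_over_n[of s]] by simp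
  have scaled: "(real (N * Suc L) - real (K * Suc L)) * h L = (real N - real K) * s" for L
    by (simp add: h_def field_simps)
  show ?thesis
  proof (rule nn_integral_square_product_of_wiener_limits_le[OF W1 W2 indep h, where c=c and d=d and N=G])
    show "(\<lambda>L. wiener_sum (c L) W1 (h L) (G L) \<omega>) \<longlonglongrightarrow> ou_process \<theta> W1 (real P * s) \<omega>"
      if "\<omega> \<in> space M" for \<omega>
      unfolding c_def h_def G_def by (rule ou_process_grid_LIMSEQ[OF W1 that assms(4,5,7)])
    show "(\<lambda>L. wiener_sum (d L) W2 (h L) (G L) \<omega>)
        \<longlonglongrightarrow> ou_process \<theta> W2 (real K * s) \<omega> - ou_process \<theta> W2 (real N * s) \<omega>"
      if "\<omega> \<in> space M" for \<omega>
      unfolding d_def h_def G_def wiener_sum_diff[symmetric]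
      using assms(6) by (intro tendsto_diff ou_process_grid_LIMSEQ[OF W2 that assms(4,5)]) simp_all
    show "(\<Sum>i<G L. (c L i)\<^sup>2) * h L \<le> 1 / (2 * \<theta>) + h L" for L
      unfolding c_def G_def using mult_le_mono1[OF assms(7)] by (intro sum_ou_coeff_square_le[OF assms(4) h])
    show "(\<Sum>i<G L. (d L i)\<^sup>2) * h L
        \<le> (1 - exp (- \<theta> * ((real N - real K) * s)))\<^sup>2 * (1 / (2 * \<theta>) + h L) + (real N - real K) * s" for L
      using sum_ou_coeff_diff_square_le[OF assms(4) h, of "K * Suc L" "N * Suc L" "N * Suc L" L]
        mult_le_mono1[OF assms(6), of "Suc L"]
      unfolding d_def G_def scaled by simp
    show "(\<lambda>L. 1 / (2 * \<theta>) + h L) \<longlonglongrightarrow> 1 / (2 * \<theta>)"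
      using tendsto_add[OF tendsto_const h_lim, of "1 / (2 * \<theta>)"] by simp
    then show "(\<lambda>L. (1 - exp (- \<theta> * ((real N - real K) * s)))\<^sup>2 * (1 / (2 * \<theta>) + h L) + (real N - real K) * s)
        \<longlonglongrightarrow> (1 - exp (- \<theta> * ((real N - real K) * s)))\<^sup>2 * (1 / (2 * \<theta>)) + (real N - real K) * s"
      by (intro tendsto_intros)
  qed
qed

lemma ou_product_increment_constant_le:
  fixes \<theta> D :: real
  assumes "\<theta> > 0" "D \<ge> 0"
  shows "4 * (1 / (2 * \<theta>) * ((1 - exp (- \<theta> * D))\<^sup>2 * (1 / (2 * \<theta>)) + D)) \<le> 3 / \<theta> * D"
proof -
  have "1 - exp (- \<theta> * D) \<le> \<theta> * D"
    using exp_ge_add_one_self[of "- \<theta> * D"] by simp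
  moreover have "(1 - exp (- \<theta> * D))\<^sup>2 \<le> 1 - exp (- \<theta> * D)"
    using assms mult_left_le[of "1 - exp (- \<theta> * D)" "1 - exp (- \<theta> * D)"]
    by (simp add: power2_eq_square)
  ultimately have "(1 - exp (- \<theta> * D))\<^sup>2 / \<theta> \<le> D"
    using assms(1) by (simp add: divide_le_eq mult.commute)
  then have "((1 - exp (- \<theta> * D))\<^sup>2 / \<theta> + 2 * D) / \<theta> \<le> 3 * D / \<theta>"
    using assms(1) by (intro divide_right_mono) auto
  moreover have "4 * (1 / (2 * \<theta>) * ((1 - exp (- \<theta> * D))\<^sup>2 * (1 / (2 * \<theta>)) + D))
      = ((1 - exp (- \<theta> * D))\<^sup>2 / \<theta> + 2 * D) / \<theta>"
    using assms(1) by (simp add: field_simps)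
  ultimately show ?thesis
    by simp
qed

lemma nn_integral_ou_product_increment_le:
  assumes W1: "std_brownian_motion M W1" and W2: "std_brownian_motion M W2"
    and indep: "indep_processes M W1 W2" and "\<theta> > 0" "s > 0" "K \<le> N"
  shows "(\<integral>\<^sup>+\<omega>. ennreal ((ou_process \<theta> W1 (real K * s) \<omega> * ou_process \<theta> W2 (real K * s) \<omega>
      - ou_process \<theta> W1 (real N * s) \<omega> * ou_process \<theta> W2 (real N * s) \<omega>)\<^sup>2) \<partial>M)
    \<le> ennreal (3 / \<theta> * ((real N - real K) * s))"
proof -
  define D where "D = (real N - real K) * s"
  define B where "B = 1 / (2 * \<theta>) * ((1 - exp (- \<theta> * D))\<^sup>2 * (1 / (2 * \<theta>)) + D)"
  let ?X1 = "ou_process \<theta> W1" and ?X2 = "ou_process \<theta> W2"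
  have D: "D \<ge> 0" using assms(5,6) by (simp add: D_def)
  have indep': "indep_processes M W2 W1"
    by (rule indep_processes_commute[OF std_brownian_motion_prob_space[OF W1] indep])
  have [measurable]: "?X1 t \<in> borel_measurable M" "?X2 t \<in> borel_measurable M" for t
    using ou_process_measurable[OF W1 assms(4)] ou_process_measurable[OF W2 assms(4)] by simp_all
  have "(\<integral>\<^sup>+\<omega>. ennreal ((?X1 (real K * s) \<omega> * ?X2 (real K * s) \<omega> - ?X1 (real N * s) \<omega> * ?X2 (real N * s) \<omega>)\<^sup>2) \<partial>M)
      = (\<integral>\<^sup>+\<omega>. ennreal ((?X1 (real K * s) \<omega> * (?X2 (real K * s) \<omega> - ?X2 (real N * s) \<omega>)
          + ?X2 (real N * s) \<omega> * (?X1 (real K * s) \<omega> - ?X1 (real N * s) \<omega>))\<^sup>2) \<partial>M)"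
    by (simp add: algebra_simps)
  also have "\<dots> \<le> 2 * ennreal B + 2 * ennreal B"
    using nn_integral_ou_times_ou_increment_le[OF W1 W2 indep assms(4-6) assms(6)]
      nn_integral_ou_times_ou_increment_le[OF W2 W1 indep' assms(4-6) order_refl]
    unfolding B_def D_def
    by (intro order_trans[OF nn_integral_square_add_le] add_mono mult_left_mono) auto
  also have "\<dots> = ennreal (4 * B)"
  proof -
    have "B \<ge> 0" using D assms(4) by (simp add: B_def)
    then have "2 * ennreal B = ennreal (2 * B)" by (simp add: ennreal_mult)
    with \<open>B \<ge> 0\<close> show ?thesis by (simp flip: ennreal_plus)
  qed
  also have "\<dots> \<le> ennreal (3 / \<theta> * D)"
    unfolding B_def using ou_product_increment_constant_le[OF assms(4) D] by (rule ennreal_leI)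
  finally show ?thesis
    unfolding D_def .
qed

section \<open>The discretisation error\<close>

lemma Riemann_defect_LIMSEQ:
  fixes Y :: "real \<Rightarrow> real"
  assumes cont: "continuous_on {0..real n * \<Delta>} Y" and "\<Delta> > 0"
  shows "(\<lambda>m. \<Sum>(k, j)\<in>{..<n} \<times> {..<Suc m}. \<Delta> / real (Suc m) *
      (Y (real (k * Suc m) * (\<Delta> / real (Suc m))) - Y (real (k * Suc m + j) * (\<Delta> / real (Suc m)))))
    \<longlonglongrightarrow> \<Delta> * (\<Sum>k<n. Y (real k * \<Delta>)) - integral {0..real n * \<Delta>} Y"
proof -
  define R where "R k N = (\<Sum>j<N. (real (Suc k) * \<Delta> - real k * \<Delta>) / real N *
      Y (real k * \<Delta> + real j * ((real (Suc k) * \<Delta> - real k * \<Delta>) / real N)))" for k N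
  have R: "(\<lambda>m. R k (Suc m)) \<longlonglongrightarrow> integral {real k * \<Delta>..real (Suc k) * \<Delta>} Y" if "k < n" for k
  proof -
    have "real (Suc k) * \<Delta> \<le> real n * \<Delta>"
      using that assms(2) by (intro mult_right_mono) auto
    then have "{real k * \<Delta>..real (Suc k) * \<Delta>} \<subseteq> {0..real n * \<Delta>}"
      using assms(2) by auto
    then show ?thesis
      unfolding R_def using assms(2)
      by (intro LIMSEQ_Suc left_Riemann_sum_LIMSEQ continuous_on_subset[OF cont]) auto
  qed
  have inner: "(\<Sum>j<Suc m. \<Delta> / real (Suc m) * (Y (real (k * Suc m) * (\<Delta> / real (Suc m)))
      - Y (real (k * Suc m + j) * (\<Delta> / real (Suc m))))) = \<Delta> * Y (real k * \<Delta>) - R k (Suc m)" for k m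
  proof -
    have "real (k * Suc m) * (\<Delta> / real (Suc m)) = real k * \<Delta>"
      "real (k * Suc m + j) * (\<Delta> / real (Suc m)) = real k * \<Delta> + real j * (\<Delta> / real (Suc m))"
      "real (Suc k) * \<Delta> - real k * \<Delta> = \<Delta>" for j
      by (simp_all add: field_simps)
    then show ?thesis
      by (simp add: R_def right_diff_distrib sum_subtractf)
  qed
  have "(\<lambda>m. \<Sum>k<n. \<Delta> * Y (real k * \<Delta>) - R k (Suc m))
      \<longlonglongrightarrow> (\<Sum>k<n. \<Delta> * Y (real k * \<Delta>) - integral {real k * \<Delta>..real (Suc k) * \<Delta>} Y)"
    using R by (intro tendsto_sum tendsto_diff tendsto_const) auto
  moreover have "(\<Sum>k<n. integral {real k * \<Delta>..real (Suc k) * \<Delta>} Y) = integral {0..real n * \<Delta>} Y"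
    using integral_sum_cells[of \<Delta> 0 n Y] assms by simp
  ultimately have "(\<lambda>m. \<Sum>k<n. \<Delta> * Y (real k * \<Delta>) - R k (Suc m))
      \<longlonglongrightarrow> (\<Sum>k<n. \<Delta> * Y (real k * \<Delta>)) - integral {0..real n * \<Delta>} Y"
    by (simp only: sum_subtractf)
  then show ?thesis
    unfolding sum.cartesian_product[symmetric] inner sum_distrib_left .
qed

lemma power2_normalized_sum_le:
  fixes x :: "'i \<Rightarrow> real"
  assumes "h \<ge> 0"
  shows "(1 / sqrt (real (card I) * h) * (\<Sum>i\<in>I. h * x i))\<^sup>2 \<le> (\<Sum>i\<in>I. h * (x i)\<^sup>2)"
proof (cases "real (card I) * h = 0")
  case True
  show ?thesis
    using assms unfolding True by (simp add: sum_nonneg)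
next
  case False
  then have pos: "real (card I) * h > 0"
    using assms by (simp add: order_le_less)
  have "(\<Sum>i\<in>I. h * x i)\<^sup>2 \<le> (\<Sum>i\<in>I. (h * x i)\<^sup>2) * real (card I)"
    by (rule sum_squared_le_sum_of_squares)
  also have "\<dots> = real (card I) * h * (\<Sum>i\<in>I. h * (x i)\<^sup>2)"
    by (simp add: power2_eq_square sum_distrib_left mult_ac)
  finally have "(\<Sum>i\<in>I. h * x i)\<^sup>2 / (real (card I) * h) \<le> (\<Sum>i\<in>I. h * (x i)\<^sup>2)"
    using pos by (simp add: pos_divide_le_eq mult.commute)
  moreover have "(1 / sqrt (real (card I) * h) * (\<Sum>i\<in>I. h * x i))\<^sup>2
      = (\<Sum>i\<in>I. h * x i)\<^sup>2 / (real (card I) * h)"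
    using pos by (simp add: power_mult_distrib power_divide)
  ultimately show ?thesis
    by simp
qed

lemma Riemann_defect_moment_le:
  fixes Y :: "real \<Rightarrow> 'a \<Rightarrow> real"
  assumes meas: "\<And>t. Y t \<in> borel_measurable M"
    and incr: "\<And>s K N. s > 0 \<Longrightarrow> K \<le> N \<Longrightarrow>
      (\<integral>\<^sup>+\<omega>. ennreal ((Y (real K * s) \<omega> - Y (real N * s) \<omega>)\<^sup>2) \<partial>M) \<le> ennreal (c * ((real N - real K) * s))"
    and "c \<ge> 0" "\<Delta> > 0"
  shows "(\<integral>\<^sup>+\<omega>. ennreal ((1 / sqrt (real n * \<Delta>) * (\<Sum>(k, j)\<in>{..<n} \<times> {..<Suc m}. \<Delta> / real (Suc m) *
      (Y (real (k * Suc m) * (\<Delta> / real (Suc m))) \<omega> - Y (real (k * Suc m + j) * (\<Delta> / real (Suc m))) \<omega>)))\<^sup>2) \<partial>M)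
    \<le> ennreal (c * real n * \<Delta>\<^sup>2)"
proof -
  define I where "I = {..<n} \<times> {..<Suc m}"
  define h where "h = \<Delta> / real (Suc m)"
  define D where "D k j \<omega> = Y (real (k * Suc m) * h) \<omega> - Y (real (k * Suc m + j) * h) \<omega>" for k j \<omega>
  have h: "h > 0" using assms(4) by (simp add: h_def)
  have card: "real (card I) * h = real n * \<Delta>"
    by (simp add: I_def h_def field_simps)
  have pointwise: "(1 / sqrt (real n * \<Delta>) * (\<Sum>(k, j)\<in>I. h * D k j \<omega>))\<^sup>2 \<le> (\<Sum>(k, j)\<in>I. h * (D k j \<omega>)\<^sup>2)" for \<omega>
    using power2_normalized_sum_le[of h I "\<lambda>(k, j). D k j \<omega>"] h unfolding card by (simp add: split_def)
  have moment: "(\<integral>\<^sup>+\<omega>. ennreal (h * (D k j \<omega>)\<^sup>2) \<partial>M) \<le> ennreal (h * (c * \<Delta>))" if "j < Suc m" for k j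
  proof -
    have "real j * h \<le> real (Suc m) * h"
      using that h by (intro mult_right_mono) auto
    then have "real j * h \<le> \<Delta>"
      by (simp add: h_def)
    then have "c * ((real (k * Suc m + j) - real (k * Suc m)) * h) \<le> c * \<Delta>"
      using assms(3) by (simp add: mult_left_mono)
    then have "(\<integral>\<^sup>+\<omega>. ennreal ((D k j \<omega>)\<^sup>2) \<partial>M) \<le> ennreal (c * \<Delta>)"
      unfolding D_def by (intro order_trans[OF incr[OF h] ennreal_leI]) auto
    then show ?thesis
      using h assms(3,4) meas by (simp add: D_def ennreal_mult nn_integral_cmult mult_left_mono)
  qed
  have "(\<integral>\<^sup>+\<omega>. ennreal ((1 / sqrt (real n * \<Delta>) * (\<Sum>(k, j)\<in>I. h * D k j \<omega>))\<^sup>2) \<partial>M)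
      \<le> (\<integral>\<^sup>+\<omega>. (\<Sum>(k, j)\<in>I. ennreal (h * (D k j \<omega>)\<^sup>2)) \<partial>M)"
    using pointwise h by (intro nn_integral_mono) (auto simp: case_prod_beta sum_ennreal intro: ennreal_leI)
  also have "\<dots> = (\<Sum>(k, j)\<in>I. \<integral>\<^sup>+\<omega>. ennreal (h * (D k j \<omega>)\<^sup>2) \<partial>M)"
    unfolding D_def case_prod_beta by (rule nn_integral_sum) (use meas in measurable)
  also have "\<dots> \<le> (\<Sum>(k, j)\<in>I. ennreal (h * (c * \<Delta>)))"
    using moment by (intro sum_mono) (auto simp: I_def)
  also have "\<dots> = ennreal (c * real n * \<Delta>\<^sup>2)"
    using card[symmetric] h assms(3,4) by (simp add: power2_eq_square mult_ac ennreal_of_nat_eq_real_of_nat flip: ennreal_mult)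
  finally show ?thesis
    unfolding I_def h_def D_def .
qed

lemma delta_err_eq:
  assumes "n \<ge> 1" "\<Delta> > 0"
  shows "delta_err \<theta> W1 W2 \<Delta> n \<omega> = 1 / sqrt (real n * \<Delta>) *
    (\<Delta> * (\<Sum>k<n. ou_process \<theta> W1 (real k * \<Delta>) \<omega> * ou_process \<theta> W2 (real k * \<Delta>) \<omega>)
      - integral {0..real n * \<Delta>} (\<lambda>t. ou_process \<theta> W1 t \<omega> * ou_process \<theta> W2 t \<omega>))"
proof -
  have "sqrt (real n * \<Delta>) * sqrt (real n * \<Delta>) = real n * \<Delta>"
    using assms by simp
  then have "sqrt (real n * \<Delta>) / real n = 1 / sqrt (real n * \<Delta>) * \<Delta>"
    using assms by (simp add: field_simps)
  then show ?thesis
    by (simp add: delta_err_def A_riemann_def F_integral_def right_diff_distrib)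
qed

lemma nn_integral_delta_err_square_le:
  assumes W1: "std_brownian_motion M W1" and W2: "std_brownian_motion M W2"
    and indep: "indep_processes M W1 W2" and "\<theta> > 0" "n \<ge> 1" "\<Delta> > 0"
  shows "(\<integral>\<^sup>+\<omega>. ennreal ((delta_err \<theta> W1 W2 \<Delta> n \<omega>)\<^sup>2) \<partial>M) \<le> ennreal (3 / \<theta> * real n * \<Delta>\<^sup>2)"
proof -
  define Y where "Y t \<omega> = ou_process \<theta> W1 t \<omega> * ou_process \<theta> W2 t \<omega>" for t \<omega>
  define S where "S m \<omega> = 1 / sqrt (real n * \<Delta>) * (\<Sum>(k, j)\<in>{..<n} \<times> {..<Suc m}. \<Delta> / real (Suc m) *
      (Y (real (k * Suc m) * (\<Delta> / real (Suc m))) \<omega> - Y (real (k * Suc m + j) * (\<Delta> / real (Suc m))) \<omega>))"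
    for m \<omega>
  have [measurable]: "Y t \<in> borel_measurable M" for t
    unfolding Y_def[abs_def]
    using ou_process_measurable[OF W1 assms(4)] ou_process_measurable[OF W2 assms(4)] by measurable
  show ?thesis
  proof (rule nn_integral_tendsto_le)
    show "(\<lambda>\<omega>. ennreal ((S m \<omega>)\<^sup>2)) \<in> borel_measurable M" for m
      unfolding S_def by measurable
    show "(\<lambda>m. ennreal ((S m \<omega>)\<^sup>2)) \<longlonglongrightarrow> ennreal ((delta_err \<theta> W1 W2 \<Delta> n \<omega>)\<^sup>2)"
      if "\<omega> \<in> space M" for \<omega>
    proof -
      have "continuous_on {0..real n * \<Delta>} (\<lambda>t. Y t \<omega>)"
        unfolding Y_def using std_brownian_motion_continuous_on[OF W1 that] std_brownian_motion_continuous_on[OF W2 that]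
        by (intro continuous_intros ou_process_continuous_on)
      from Riemann_defect_LIMSEQ[OF this assms(6)]
      have "(\<lambda>m. S m \<omega>) \<longlonglongrightarrow> delta_err \<theta> W1 W2 \<Delta> n \<omega>"
        unfolding S_def delta_err_eq[OF assms(5,6)] Y_def by (intro tendsto_intros)
      then show ?thesis
        by (intro tendsto_ennrealI tendsto_intros)
    qed
    show "(\<integral>\<^sup>+\<omega>. ennreal ((S m \<omega>)\<^sup>2) \<partial>M) \<le> ennreal (3 / \<theta> * real n * \<Delta>\<^sup>2)" for m
      unfolding S_def
    proof (rule Riemann_defect_moment_le)
      show "(\<integral>\<^sup>+\<omega>. ennreal ((Y (real K * s) \<omega> - Y (real N * s) \<omega>)\<^sup>2) \<partial>M)
          \<le> ennreal (3 / \<theta> * ((real N - real K) * s))" if "s > 0" "K \<le> N" for s K N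
        unfolding Y_def by (rule nn_integral_ou_product_increment_le[OF W1 W2 indep assms(4) that])
    qed (use assms(4,6) in auto)
  qed simp
qed

theorem lemma4p1:
  fixes M :: "'a measure" and W1 W2 :: "real \<Rightarrow> 'a \<Rightarrow> real"
    and \<theta> :: real and \<Delta> :: "nat \<Rightarrow> real"
  assumes "\<theta> > 0"
    and "std_brownian_motion M W1" and "std_brownian_motion M W2"
    and "indep_processes M W1 W2"
    and "\<And>n. n \<ge> 1 \<Longrightarrow> \<Delta> n > 0"
    and "\<Delta> \<longlonglongrightarrow> 0"
    and "filterlim (\<lambda>n. real n * \<Delta> n) at_top sequentially"
  shows "(\<forall>n\<ge>1. \<Delta> n \<le> 1 \<longrightarrow>
            (\<integral>\<^sup>+ \<omega>. ennreal ((delta_err \<theta> W1 W2 (\<Delta> n) n \<omega>)\<^sup>2) \<partial>M)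
              \<le> ennreal (C_theta \<theta> * real n * (\<Delta> n)\<^sup>2))
       \<and> ((\<lambda>n. real n * (\<Delta> n)\<^sup>2) \<longlonglongrightarrow> 0 \<longrightarrow>
            (\<lambda>n. \<integral>\<^sup>+ \<omega>. ennreal ((delta_err \<theta> W1 W2 (\<Delta> n) n \<omega>)\<^sup>2) \<partial>M) \<longlonglongrightarrow> 0)"
proof -
  have bound: "(\<integral>\<^sup>+ \<omega>. ennreal ((delta_err \<theta> W1 W2 (\<Delta> n) n \<omega>)\<^sup>2) \<partial>M)
      \<le> ennreal (3 / \<theta> * (real n * (\<Delta> n)\<^sup>2))" if "n \<ge> 1" for n
    using nn_integral_delta_err_square_le[OF assms(2-4,1) that assms(5)[OF that]] by (simp add: mult.assoc)
  have "3 / \<theta> \<le> 4 * (8 / (9 * \<theta>))"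
    using assms(1) by (simp add: field_simps)
  then have "3 / \<theta> \<le> C_theta \<theta>"
    unfolding C_theta_def by (smt (verit) max.cobounded1)
  then have "ennreal (3 / \<theta> * (real n * (\<Delta> n)\<^sup>2)) \<le> ennreal (C_theta \<theta> * real n * (\<Delta> n)\<^sup>2)" for n
    unfolding mult.assoc by (intro ennreal_leI mult_right_mono) simp_all
  moreover have "(\<lambda>n. \<integral>\<^sup>+ \<omega>. ennreal ((delta_err \<theta> W1 W2 (\<Delta> n) n \<omega>)\<^sup>2) \<partial>M) \<longlonglongrightarrow> 0"
    if "(\<lambda>n. real n * (\<Delta> n)\<^sup>2) \<longlonglongrightarrow> 0"
  proof (rule tendsto_sandwich[OF _ _ tendsto_const])
    show "\<forall>\<^sub>F n in sequentially. (\<integral>\<^sup>+ \<omega>. ennreal ((delta_err \<theta> W1 W2 (\<Delta> n) n \<omega>)\<^sup>2) \<partial>M)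
        \<le> ennreal (3 / \<theta> * (real n * (\<Delta> n)\<^sup>2))"
      using bound by (intro eventually_sequentiallyI[of 1])
    show "(\<lambda>n. ennreal (3 / \<theta> * (real n * (\<Delta> n)\<^sup>2))) \<longlonglongrightarrow> 0"
      using tendsto_ennrealI[OF tendsto_mult[OF tendsto_const that, of "3 / \<theta>"]] by simp
  qed simp
  ultimately show ?thesis
    using bound order_trans by blast
qed

end
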